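(* Let $\pi\colon\mathsf{States}\to\mathbb{R}_{\ge0}$ be a potential function. For every program $C$ of the heap-manipulating probabilistic guarded command language, $$\mathsf{ert}[\![C]\!](0)\;\preceq\;\mathsf{aert}_\pi[\![C]\!](0)+\pi .$$
   Context: States and programs. Fix a finite set $\mathrm{Vars}$ of variables; values are $\mathbb{N}$, locations are $\mathbb{N}_{>0}$. A stack is $s\colon \mathrm{Vars}\to\mathbb{N}$; a heap is a partial map $h$ from a finite set $\mathrm{dom}(h)\subseteq\mathbb{N}_{>0}$ to $\mathbb{N}$. $h_1\perp h_2$ means disjoint domains; then $h_1\star h_2$ is their union; $h_\emptyset$ is the empty heap. $\mathsf{States}$ is the set of pairs $(s,h)$. $s(e)$ is the value of a (heap-independent) arithmetic expression $e$ under $s$, $s\models\varphi$ means the Boolean expression $\varphi$ holds under $s$, $s[x\mapsto v]$ is the updated stack. Programs are generated by $C ::= \mathtt{tick}(e) \mid x:=e \mid x:=\mathtt{alloc}(e) \mid \langle e\rangle:=e' \mid x:=\langle e\rangle \mid \mathtt{free}(e) \mid \{C\}[p]\{C\} \mid \mathtt{if}(\varphi)\{C\}\mathtt{else}\{C\} \mid C;C \mid \mathtt{while}(\varphi)\{C\}$, where $p$ is an expression with $s(p)\in[0,1]\cap\mathbb{Q}$ for all $s$. The statements other than tick, probabilistic choice, conditional, sequencing and loops are called atomic. Runtimes. $\mathbb{T}$ is the set of functions $\mathsf{States}\to[0,\infty]$, ordered pointwise by $\preceq$; arithmetic is pointwise with $0\cdot\infty=0$; $0$ denotes the constant-zero function.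 $[\varphi]$ is the $0/1$-valued Iverson bracket. Truncated subtraction: $a\dot- b=\max(a-b,0)$, $\infty\dot- b=\infty$ for finite $b$, $a\dot-\infty=0$. $(f\oplus g)(s,h)=\min\{f(s,h_1)+g(s,h_2)\mid h=h_1\star h_2\}$; $(f \mathbin{-\!\!\ominus} g)(s,h)=\sup\{g(s,h\star h')\dot- f(s,h')\mid h'\perp h\}$; $(\inf y\colon f)(s,h)=\inf_{v\in\mathbb{N}} f(s[y\mapsto v],h)$, $(\sup y\colon f)(s,h)=\sup_{v\in\mathbb{N}}f(s[y\mapsto v],h)$; $f[x/e](s,h)=f(s[x\mapsto s(e)],h)$. $\mathsf{tm}(e)(s,h)=s(e)$ if $h=h_\emptyset$, else $\infty$; $[e\mapsto e'](s,h)=0$ if $\mathrm{dom}(h)=\{s(e)\}$ and $h(s(e))=s(e')$, else $\infty$; $[e\mapsto -](s,h)=0$ if $\mathrm{dom}(h)=\{s(e)\}$, else $\infty$; $\bigoplus_{i=1}^{e} f_i$ is the separating sum over $i=1,\dots,s(e)$ (empty one: $[\mathsf{emp}]$, which is $0$ if $h=h_\emptyset$, else $\infty$). $\mathsf{ert}[\![C]\!]\colon\mathbb{T}\to\mathbb{T}$ (with $v$ fresh): $\mathsf{ert}[\![\mathtt{tick}(e)]\!](f)=\mathsf{tm}(e)\oplus f$; $\mathsf{ert}[\![x:=e]\!](f)=f[x/e]$; $\mathsf{ert}[\![x:=\mathtt{alloc}(e)]\!](f)=\sup v\colon (\bigoplus_{i=1}^{e}[v+i-1\mapsto 0])\mathbin{-\!\!\ominus}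 f[x/v]$; $\mathsf{ert}[\![\langle e\rangle:=e']\!](f)=[e\mapsto-]\oplus([e\mapsto e']\mathbin{-\!\!\ominus} f)$; $\mathsf{ert}[\![x:=\langle e\rangle]\!](f)=\inf v\colon [e\mapsto v]\oplus([e\mapsto v]\mathbin{-\!\!\ominus} f[x/v])$; $\mathsf{ert}[\![\mathtt{free}(e)]\!](f)=[e\mapsto-]\oplus f$; $\mathsf{ert}[\![C_1;C_2]\!](f)=\mathsf{ert}[\![C_1]\!](\mathsf{ert}[\![C_2]\!](f))$; conditional: $[\varphi]\cdot\mathsf{ert}[\![C_1]\!](f)+[\neg\varphi]\cdot\mathsf{ert}[\![C_2]\!](f)$; probabilistic choice: $p\cdot\mathsf{ert}[\![C_1]\!](f)+(1-p)\cdot\mathsf{ert}[\![C_2]\!](f)$; $\mathsf{ert}[\![\mathtt{while}(\varphi)\{C\}]\!](f)=\mathrm{lfp}\, g.\ [\neg\varphi]\cdot f+[\varphi]\cdot\mathsf{ert}[\![C]\!](g)$. Amortized runtimes. A potential function is $\pi\colon\mathsf{States}\to\mathbb{R}_{\ge0}$. $\mathbb{A}_\pi=\{X\colon\mathsf{States}\to\mathbb{R}\cup\{\infty\}\mid -\pi\le X\}$, ordered pointwise (complete lattice, least element $-\pi$). $\mathsf{aert}_\pi[\![C]\!]\colon\mathbb{A}_\pi\to\mathbb{A}_\pi$: $\mathsf{aert}_\pi[\![\mathtt{tick}(e)]\!](X)=e+X$; for atomic $C$ other than tick, $\mathsf{aert}_\pi[\![C]\!](X)=\mathsf{ert}[\![C]\!](X+\pi)-\pi$;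 sequencing by composition; conditional $[\varphi]\cdot\mathsf{aert}_\pi[\![C_1]\!](X)+[\neg\varphi]\cdot\mathsf{aert}_\pi[\![C_2]\!](X)$; probabilistic choice $p\cdot\mathsf{aert}_\pi[\![C_1]\!](X)+(1-p)\cdot\mathsf{aert}_\pi[\![C_2]\!](X)$; $\mathsf{aert}_\pi[\![\mathtt{while}(\varphi)\{C'\}]\!](X)=\mathrm{lfp}\,Y.\ [\neg\varphi]\cdot X+[\varphi]\cdot\mathsf{aert}_\pi[\![C']\!](Y)$ in $(\mathbb{A}_\pi,\preceq)$. *)

theory Defs
  imports "HOL-Library.Extended_Nonnegative_Real" "HOL-Library.Extended_Real"
begin

type_synonym 'v stack = "'v \<Rightarrow> nat"

typedef heap = "{h :: nat \<rightharpoonup> nat. finite (dom h) \<and> 0 \<notin> dom h}"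
  by (rule exI[of _ Map.empty]) simp

definition hdom :: "heap \<Rightarrow> nat set" where
  "hdom h = dom (Rep_heap h)"

definition hemp :: heap where
  "hemp = Abs_heap Map.empty"

definition hdisj :: "heap \<Rightarrow> heap \<Rightarrow> bool" where
  "hdisj h1 h2 \<longleftrightarrow> hdom h1 \<inter> hdom h2 = {}"

definition hunion :: "heap \<Rightarrow> heap \<Rightarrow> heap" where
  "hunion h1 h2 = Abs_heap (Rep_heap h1 ++ Rep_heap h2)"

type_synonym 'v state = "'v stack \<times> heap"

text \<open>Runtimes (values in [0,\<infinity>]); ennreal has 0 * \<infinity> = 0.\<close>
type_synonym 'v rt = "'v state \<Rightarrow> ennreal"

type_synonym 'v expr = "'v stack \<Rightarrow> nat"
type_synonym 'v bexpr = "'v stack \<Rightarrow> bool"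
type_synonym 'v pexpr = "'v stack \<Rightarrow> rat"

datatype 'v prog =
    Tick "'v expr"
  | Assign 'v "'v expr"
  | Alloc 'v "'v expr"
  | Store "'v expr" "'v expr"
  | Load 'v "'v expr"
  | Free "'v expr"
  | PChoice "'v prog" "'v pexpr" "'v prog"
  | If "'v bexpr" "'v prog" "'v prog"
  | Seq "'v prog" "'v prog"
  | While "'v bexpr" "'v prog"

primrec wf_prog :: "'v prog \<Rightarrow> bool" where
  "wf_prog (Tick e) = True"
| "wf_prog (Assign x e) = True"
| "wf_prog (Alloc x e) = True"
| "wf_prog (Store e e') = True"
| "wf_prog (Load x e) = True"
| "wf_prog (Free e) = True"
| "wf_prog (PChoice C1 p C2) = ((\<forall>s. 0 \<le> p s \<and> p s \<le> 1) \<and> wf_prog C1 \<and> wf_prog C2)"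
| "wf_prog (If b C1 C2) = (wf_prog C1 \<and> wf_prog C2)"
| "wf_prog (Seq C1 C2) = (wf_prog C1 \<and> wf_prog C2)"
| "wf_prog (While b C) = wf_prog C"

definition tsub :: "ennreal \<Rightarrow> ennreal \<Rightarrow> ennreal" where
  "tsub a b = (if b = top then 0 else if a = top then top else a - b)"

definition sepcon :: "'v rt \<Rightarrow> 'v rt \<Rightarrow> 'v rt" where
  "sepcon f g = (\<lambda>(s, h). Inf {f (s, h1) + g (s, h2) | h1 h2.
                                  hdisj h1 h2 \<and> h = hunion h1 h2})"

definition sepimp :: "'v rt \<Rightarrow> 'v rt \<Rightarrow> 'v rt" where
  "sepimp f g = (\<lambda>(s, h). Sup {tsub (g (s, hunion h h')) (f (s, h')) | h'. hdisj h' h})"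

definition tm :: "'v expr \<Rightarrow> 'v rt" where
  "tm e = (\<lambda>(s, h). if h = hemp then of_nat (e s) else top)"

definition pto :: "'v expr \<Rightarrow> 'v expr \<Rightarrow> 'v rt" where
  "pto e e' = (\<lambda>(s, h). if hdom h = {e s} \<and> Rep_heap h (e s) = Some (e' s) then 0 else top)"

definition pto_any :: "'v expr \<Rightarrow> 'v rt" where
  "pto_any e = (\<lambda>(s, h). if hdom h = {e s} then 0 else top)"

definition emp :: "'v rt" where
  "emp = (\<lambda>(s, h). if h = hemp then 0 else top)"

primrec sepsum :: "(nat \<Rightarrow> 'v rt) \<Rightarrow> nat \<Rightarrow> 'v rt" where
  "sepsum fs 0 = emp"
| "sepsum fs (Suc n) = sepcon (sepsum fs n) (fs (Suc n))"

definition sepsum_e :: "(nat \<Rightarrow> 'v rt) \<Rightarrow> 'v expr \<Rightarrow> 'v rt" where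
  "sepsum_e fs e = (\<lambda>(s, h). sepsum fs (e s) (s, h))"

definition subst :: "'v rt \<Rightarrow> 'v \<Rightarrow> 'v expr \<Rightarrow> 'v rt" where
  "subst f x e = (\<lambda>(s, h). f (s(x := e s), h))"

text \<open>The fresh logical variable v is modelled by a meta-level quantified value.\<close>
primrec ert :: "'v prog \<Rightarrow> 'v rt \<Rightarrow> 'v rt" where
  "ert (Tick e) f = sepcon (tm e) f"
| "ert (Assign x e) f = subst f x e"
| "ert (Alloc x e) f = (\<lambda>\<sigma>. SUP v::nat.
      sepimp (sepsum_e (\<lambda>i. pto (\<lambda>_. v + i - 1) (\<lambda>_. 0)) e) (subst f x (\<lambda>_. v)) \<sigma>)"
| "ert (Store e e') f = sepcon (pto_any e) (sepimp (pto e e') f)"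
| "ert (Load x e) f = (\<lambda>\<sigma>. INF v::nat.
      sepcon (pto e (\<lambda>_. v)) (sepimp (pto e (\<lambda>_. v)) (subst f x (\<lambda>_. v))) \<sigma>)"
| "ert (Free e) f = sepcon (pto_any e) f"
| "ert (PChoice C1 p C2) f = (\<lambda>\<sigma>. ennreal (of_rat (p (fst \<sigma>))) * ert C1 f \<sigma>
                                  + ennreal (1 - of_rat (p (fst \<sigma>))) * ert C2 f \<sigma>)"
| "ert (If b C1 C2) f = (\<lambda>\<sigma>. if b (fst \<sigma>) then ert C1 f \<sigma> else ert C2 f \<sigma>)"
| "ert (Seq C1 C2) f = ert C1 (ert C2 f)"
| "ert (While b C) f = lfp (\<lambda>g \<sigma>. if b (fst \<sigma>) then ert C g \<sigma> else f \<sigma>)"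

text \<open>Amortized runtimes: functions into real \<union> {\<infinity>} (modelled in ereal) bounded below by -\<pi>.\<close>
type_synonym 'v art = "'v state \<Rightarrow> ereal"

definition in_A :: "('v state \<Rightarrow> real) \<Rightarrow> 'v art \<Rightarrow> bool" where
  "in_A \<pi> X \<longleftrightarrow> (\<forall>\<sigma>. - ereal (\<pi> \<sigma>) \<le> X \<sigma>)"

definition atomic_aert :: "('v state \<Rightarrow> real) \<Rightarrow> 'v prog \<Rightarrow> 'v art \<Rightarrow> 'v art" where
  "atomic_aert \<pi> C X = (\<lambda>\<sigma>. enn2ereal (ert C (\<lambda>\<sigma>'. e2ennreal (X \<sigma>' + ereal (\<pi> \<sigma>'))) \<sigma>)
                             - ereal (\<pi> \<sigma>))"

text \<open>Least fixed point in the complete lattice A_\<pi> (Knaster-Tarski).\<close>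
definition lfp_A :: "('v state \<Rightarrow> real) \<Rightarrow> ('v art \<Rightarrow> 'v art) \<Rightarrow> 'v art" where
  "lfp_A \<pi> F = Inf {Y. in_A \<pi> Y \<and> F Y \<le> Y}"

primrec aert :: "('v state \<Rightarrow> real) \<Rightarrow> 'v prog \<Rightarrow> 'v art \<Rightarrow> 'v art" where
  "aert \<pi> (Tick e) X = (\<lambda>\<sigma>. ereal (of_nat (e (fst \<sigma>))) + X \<sigma>)"
| "aert \<pi> (Assign x e) X = atomic_aert \<pi> (Assign x e) X"
| "aert \<pi> (Alloc x e) X = atomic_aert \<pi> (Alloc x e) X"
| "aert \<pi> (Store e e') X = atomic_aert \<pi> (Store e e') X"
| "aert \<pi> (Load x e) X = atomic_aert \<pi> (Load x e) X"
| "aert \<pi> (Free e) X = atomic_aert \<pi> (Free e) X"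
| "aert \<pi> (PChoice C1 p C2) X = (\<lambda>\<sigma>. ereal (of_rat (p (fst \<sigma>))) * aert \<pi> C1 X \<sigma>
                                      + ereal (1 - of_rat (p (fst \<sigma>))) * aert \<pi> C2 X \<sigma>)"
| "aert \<pi> (If b C1 C2) X = (\<lambda>\<sigma>. if b (fst \<sigma>) then aert \<pi> C1 X \<sigma> else aert \<pi> C2 X \<sigma>)"
| "aert \<pi> (Seq C1 C2) X = aert \<pi> C1 (aert \<pi> C2 X)"
| "aert \<pi> (While b C) X = lfp_A \<pi> (\<lambda>Y \<sigma>. if b (fst \<sigma>) then aert \<pi> C Y \<sigma> else X \<sigma>)"

end

theory Submission
  imports Defs
begin

text \<open>Shifting by the potential, \<open>Y \<mapsto> Y + \<pi>\<close>, identifies the amortized runtimes in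
  \<open>A\<^sub>\<pi>\<close> with ordinary runtimes. We prove the stronger invariant that \<open>f \<le> X + \<pi>\<close> implies
  \<open>ert C f \<le> aert C X + \<pi>\<close>. For atomic statements other than tick
  the shift commutes with \<open>aert\<close> by definition, so monotonicity of \<open>ert\<close> suffices; a tick
  adds the same cost on both sides; a probabilistic choice is an affine combination, which
  commutes with the shift. For a loop, the shift of every prefixed point of the amortized loop
  functional is a prefixed point of the ordinary one, so Park induction bounds the least
  fixed point of the latter by the shift of the infimum of the former prefixed points,
  which is the least fixed point in \<open>A\<^sub>\<pi>\<close>.\<close>

lemma tsub_mono_left: "a \<le> a' \<Longrightarrow> tsub a b \<le> tsub a' b"
  unfolding tsub_def by (auto simp: ennreal_minus_mono top_unique)

lemma sepcon_mono_right: "g \<le> g' \<Longrightarrow> sepcon f g \<le> sepcon f g'"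
  unfolding sepcon_def le_fun_def
  by (fastforce intro!: Inf_mono add_left_mono)

lemma sepimp_mono_right: "g \<le> g' \<Longrightarrow> sepimp f g \<le> sepimp f g'"
  unfolding sepimp_def le_fun_def
  by (fastforce intro!: Sup_mono tsub_mono_left)

lemma subst_mono: "g \<le> g' \<Longrightarrow> subst g x e \<le> subst g' x e"
  unfolding subst_def le_fun_def by auto

lemma ert_mono: "f \<le> g \<Longrightarrow> ert C f \<le> ert C g"
proof (induction C arbitrary: f g)
  case (Alloc x e)
  show ?case
    by (intro le_funI) (simp add: Alloc le_funD[OF sepimp_mono_right] subst_mono SUP_mono')
next
  case (Load x e)
  show ?case
    by (intro le_funI) (simp add: Load le_funD[OF sepcon_mono_right] sepimp_mono_right subst_mono INF_mono')
next
  case (PChoice C1 p C2)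
  then show ?case
    by (simp add: le_fun_def add_mono mult_left_mono)
next
  case (If b C1 C2)
  then show ?case
    by (simp add: le_fun_def)
next
  case (While b C)
  then show ?case
    unfolding ert.simps by (intro lfp_mono) (simp add: le_fun_def)
qed (simp_all add: sepcon_mono_right sepimp_mono_right subst_mono)

lemma hunion_hemp_left: "hunion hemp h = h"
  unfolding hunion_def hemp_def by (simp add: Abs_heap_inverse Rep_heap_inverse)

lemma hdisj_hemp_left: "hdisj hemp h"
  unfolding hdisj_def hdom_def hemp_def by (simp add: Abs_heap_inverse)

lemma sepcon_le_hemp_left: "sepcon f g (s, h) \<le> f (s, hemp) + g (s, h)"
  unfolding sepcon_def
  by (force intro: Inf_lower simp: hunion_hemp_left hdisj_hemp_left)

lemma ereal_minus_plus_cancel: "(a - ereal c) + ereal c = (a::ereal)"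
  by (cases a) auto

text \<open>\<open>X + \<pi>\<close> as a runtime; the truncation at 0 by \<^const>\<open>e2ennreal\<close> is vacuous on \<open>A\<^sub>\<pi>\<close>.\<close>

definition plus_potential :: "('v state \<Rightarrow> real) \<Rightarrow> 'v art \<Rightarrow> 'v rt" where
  "plus_potential \<pi> X = (\<lambda>\<sigma>. e2ennreal (X \<sigma> + ereal (\<pi> \<sigma>)))"

lemma in_A_iff_nonneg: "in_A \<pi> X \<longleftrightarrow> (\<forall>\<sigma>. 0 \<le> X \<sigma> + ereal (\<pi> \<sigma>))"
proof -
  have "- ereal c \<le> y \<longleftrightarrow> 0 \<le> y + ereal c" for c and y :: ereal
    by (cases y) auto
  then show ?thesis
    unfolding in_A_def by blast
qed

lemma in_A_not_MInfty: "in_A \<pi> X \<Longrightarrow> X \<sigma> \<noteq> -\<infinity>"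
  unfolding in_A_def by (metis MInfty_neq_ereal(1) ereal_infty_less_eq(2) uminus_ereal.simps(1))

lemma enn2ereal_plus_potential:
  "in_A \<pi> X \<Longrightarrow> enn2ereal (plus_potential \<pi> X \<sigma>) = X \<sigma> + ereal (\<pi> \<sigma>)"
  unfolding plus_potential_def in_A_iff_nonneg by (blast intro: enn2ereal_e2ennreal)

lemma plus_potential_mono:
  "X \<sigma> \<le> Y \<sigma> \<Longrightarrow> plus_potential \<pi> X \<sigma> \<le> plus_potential \<pi> Y \<sigma>"
  unfolding plus_potential_def by (intro e2ennreal_mono add_right_mono)

lemma atomic_aert_in_A: "in_A \<pi> (atomic_aert \<pi> C X)"
  unfolding in_A_iff_nonneg atomic_aert_def
  by (simp add: ereal_minus_plus_cancel)

lemma plus_potential_atomic_aert: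
  "plus_potential \<pi> (atomic_aert \<pi> C X) = ert C (plus_potential \<pi> X)"
  unfolding plus_potential_def atomic_aert_def
  by (simp add: ereal_minus_plus_cancel)

lemma plus_potential_aert_Tick:
  assumes "in_A \<pi> X"
  shows "plus_potential \<pi> (aert \<pi> (Tick e) X) (s, h) = of_nat (e s) + plus_potential \<pi> X (s, h)"
proof -
  have "plus_potential \<pi> (aert \<pi> (Tick e) X) (s, h)
      = e2ennreal (ereal (e s) + (X (s, h) + ereal (\<pi> (s, h))))"
    by (simp add: plus_potential_def add.assoc)
  also have "\<dots> = e2ennreal (ereal (e s) + enn2ereal (plus_potential \<pi> X (s, h)))"
    using assms by (simp only: enn2ereal_plus_potential)
  also have "\<dots> = of_nat (e s) + plus_potential \<pi> X (s, h)"
    by (metis e2ennreal_enn2ereal enn2ereal_of_nat plus_ennreal.rep_eq)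
  finally show ?thesis .
qed

lemma ert_Tick_le_plus_potential:
  assumes "in_A \<pi> X" "f \<le> plus_potential \<pi> X"
  shows "ert (Tick e) f \<le> plus_potential \<pi> (aert \<pi> (Tick e) X)"
proof (rule le_funI)
  fix \<sigma> :: "'a state"
  obtain s h where \<sigma>: "\<sigma> = (s, h)" by (cases \<sigma>)
  have "ert (Tick e) f (s, h) \<le> tm e (s, hemp) + f (s, h)"
    by (simp add: sepcon_le_hemp_left)
  also have "\<dots> \<le> of_nat (e s) + plus_potential \<pi> X (s, h)"
    using assms(2) by (simp add: tm_def le_funD add_left_mono)
  also have "\<dots> = plus_potential \<pi> (aert \<pi> (Tick e) X) (s, h)"
    using assms(1) by (rule plus_potential_aert_Tick[symmetric])
  finally show "ert (Tick e) f \<sigma> \<le> plus_potential \<pi> (aert \<pi> (Tick e) X) \<sigma>"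
    unfolding \<sigma> .
qed

lemma ereal_convex_comb_plus:
  fixes a1 a2 :: ereal
  assumes "0 \<le> p" "p \<le> 1" "a1 \<noteq> -\<infinity>" "a2 \<noteq> -\<infinity>"
  shows "ereal p * a1 + ereal (1 - p) * a2 + ereal c
       = ereal p * (a1 + ereal c) + ereal (1 - p) * (a2 + ereal c)"
  using assms by (cases a1; cases a2) (auto simp: ereal_mult_infty algebra_simps)

lemma
  fixes X1 X2 :: "'v art" and p :: "'v state \<Rightarrow> real"
  assumes p: "\<And>\<sigma>. 0 \<le> p \<sigma>" "\<And>\<sigma>. p \<sigma> \<le> 1" and X: "in_A \<pi> X1" "in_A \<pi> X2"
  defines "Y \<equiv> \<lambda>\<sigma>. ereal (p \<sigma>) * X1 \<sigma> + ereal (1 - p \<sigma>) * X2 \<sigma>"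
  shows convex_comb_in_A: "in_A \<pi> Y"
    and plus_potential_convex_comb: "plus_potential \<pi> Y \<sigma>
      = ennreal (p \<sigma>) * plus_potential \<pi> X1 \<sigma> + ennreal (1 - p \<sigma>) * plus_potential \<pi> X2 \<sigma>"
proof -
  have Y_plus: "Y \<sigma> + ereal (\<pi> \<sigma>)
      = ereal (p \<sigma>) * enn2ereal (plus_potential \<pi> X1 \<sigma>)
        + ereal (1 - p \<sigma>) * enn2ereal (plus_potential \<pi> X2 \<sigma>)" for \<sigma>
  proof -
    have "X1 \<sigma> \<noteq> -\<infinity>" "X2 \<sigma> \<noteq> -\<infinity>"
      using X by (simp_all add: in_A_not_MInfty)
    then have "Y \<sigma> + ereal (\<pi> \<sigma>)
        = ereal (p \<sigma>) * (X1 \<sigma> + ereal (\<pi> \<sigma>)) + ereal (1 - p \<sigma>) * (X2 \<sigma> + ereal (\<pi> \<sigma>))"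
      unfolding Y_def using p by (intro ereal_convex_comb_plus) auto
    then show ?thesis
      using X by (simp add: enn2ereal_plus_potential)
  qed
  show "in_A \<pi> Y"
    unfolding in_A_iff_nonneg Y_plus using p by simp
  have "enn2ereal (ennreal (p \<sigma>) * plus_potential \<pi> X1 \<sigma> + ennreal (1 - p \<sigma>) * plus_potential \<pi> X2 \<sigma>)
      = ereal (p \<sigma>) * enn2ereal (plus_potential \<pi> X1 \<sigma>)
        + ereal (1 - p \<sigma>) * enn2ereal (plus_potential \<pi> X2 \<sigma>)"
    using p by (simp add: plus_ennreal.rep_eq times_ennreal.rep_eq)
  then show "plus_potential \<pi> Y \<sigma>
      = ennreal (p \<sigma>) * plus_potential \<pi> X1 \<sigma> + ennreal (1 - p \<sigma>) * plus_potential \<pi> X2 \<sigma>"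
    unfolding plus_potential_def[of \<pi> Y] Y_plus by (metis e2ennreal_enn2ereal)
qed

lemma lfp_A_in_A: "in_A \<pi> (lfp_A \<pi> F)"
  unfolding lfp_A_def in_A_def Inf_apply by (blast intro: INF_greatest)

lemma lfp_le_plus_potential_lfp_A:
  assumes "\<And>Y. in_A \<pi> Y \<Longrightarrow> F Y \<le> Y \<Longrightarrow> \<Phi> (plus_potential \<pi> Y) \<le> plus_potential \<pi> Y"
  shows "lfp \<Phi> \<le> plus_potential \<pi> (lfp_A \<pi> F)"
proof (rule le_funI)
  fix \<sigma>
  let ?S = "{Y. in_A \<pi> Y \<and> F Y \<le> Y}"
  have "enn2ereal (lfp \<Phi> \<sigma>) \<le> Y \<sigma> + ereal (\<pi> \<sigma>)" if "Y \<in> ?S" for Y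
  proof -
    from that assms have "lfp \<Phi> \<le> plus_potential \<pi> Y"
      by (blast intro: lfp_lowerbound)
    with that show ?thesis
      by (metis (mono_tags) enn2ereal_plus_potential le_funD less_eq_ennreal.rep_eq mem_Collect_eq)
  qed
  then have "enn2ereal (lfp \<Phi> \<sigma>) \<le> lfp_A \<pi> F \<sigma> + ereal (\<pi> \<sigma>)"
    unfolding lfp_A_def Inf_apply by (simp add: ereal_minus_le[symmetric] le_INF_iff)
  then show "lfp \<Phi> \<sigma> \<le> plus_potential \<pi> (lfp_A \<pi> F) \<sigma>"
    unfolding plus_potential_def by (metis e2ennreal_enn2ereal e2ennreal_mono)
qed

lemma aert_in_A: "wf_prog C \<Longrightarrow> in_A \<pi> X \<Longrightarrow> in_A \<pi> (aert \<pi> C X)"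
proof (induction C arbitrary: X)
  case (Tick e)
  then show ?case by (simp add: in_A_def add_increasing)
next
  case (PChoice C1 p C2)
  then show ?case
    using convex_comb_in_A[of "\<lambda>\<sigma>. of_rat (p (fst \<sigma>))" \<pi> "aert \<pi> C1 X" "aert \<pi> C2 X"]
    by (simp add: zero_le_of_rat_iff of_rat_le_1_iff)
next
  case (If b C1 C2)
  then show ?case by (auto simp: in_A_def)
next
  case (While b C)
  then show ?case by (simp add: lfp_A_in_A)
qed (simp_all add: atomic_aert_in_A)

lemma ert_le_plus_potential_aert:
  "wf_prog C \<Longrightarrow> in_A \<pi> X \<Longrightarrow> f \<le> plus_potential \<pi> X
   \<Longrightarrow> ert C f \<le> plus_potential \<pi> (aert \<pi> C X)"
proof (induction C arbitrary: f X)
  case (Tick e)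
  from Tick.prems(2,3) show ?case by (rule ert_Tick_le_plus_potential)
next
  case (PChoice C1 p C2)
  let ?p = "\<lambda>\<sigma>. real_of_rat (p (fst \<sigma>))"
  have p: "0 \<le> ?p \<sigma>" "?p \<sigma> \<le> 1" for \<sigma>
    using PChoice.prems(1) by (simp_all add: zero_le_of_rat_iff of_rat_le_1_iff)
  have IH: "ert C1 f \<le> plus_potential \<pi> (aert \<pi> C1 X)" "ert C2 f \<le> plus_potential \<pi> (aert \<pi> C2 X)"
    using PChoice by simp_all
  have "in_A \<pi> (aert \<pi> C1 X)" "in_A \<pi> (aert \<pi> C2 X)"
    using PChoice.prems by (simp_all add: aert_in_A)
  with p IH show ?case
    by (auto simp: le_fun_def plus_potential_convex_comb intro!: add_mono mult_left_mono)
next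
  case (If b C1 C2)
  then have "ert C1 f \<le> plus_potential \<pi> (aert \<pi> C1 X)" "ert C2 f \<le> plus_potential \<pi> (aert \<pi> C2 X)"
    by simp_all
  then show ?case
    by (simp add: le_fun_def plus_potential_def)
next
  case (Seq C1 C2)
  then show ?case by (simp add: aert_in_A)
next
  case (While b C)
  let ?\<Phi> = "\<lambda>g \<sigma>. if b (fst \<sigma>) then ert C g \<sigma> else f \<sigma>"
  let ?F = "\<lambda>Y \<sigma>. if b (fst \<sigma>) then aert \<pi> C Y \<sigma> else X \<sigma>"
  have "?\<Phi> (plus_potential \<pi> Y) \<le> plus_potential \<pi> Y" if "in_A \<pi> Y" "?F Y \<le> Y" for Y
  proof (rule le_funI)
    fix \<sigma>
    have "ert C (plus_potential \<pi> Y) \<le> plus_potential \<pi> (aert \<pi> C Y)"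
      using While that by simp
    then have "?\<Phi> (plus_potential \<pi> Y) \<sigma>
        \<le> (if b (fst \<sigma>) then plus_potential \<pi> (aert \<pi> C Y) \<sigma> else plus_potential \<pi> X \<sigma>)"
      using While.prems(3) by (simp add: le_funD)
    also have "\<dots> = plus_potential \<pi> (?F Y) \<sigma>"
      by (simp add: plus_potential_def)
    also have "\<dots> \<le> plus_potential \<pi> Y \<sigma>"
      using le_funD[OF that(2)] by (rule plus_potential_mono)
    finally show "?\<Phi> (plus_potential \<pi> Y) \<sigma> \<le> plus_potential \<pi> Y \<sigma>" .
  qed
  then show ?case
    by (simp add: lfp_le_plus_potential_lfp_A)
qed (simp_all only: aert.simps plus_potential_atomic_aert ert_mono)

theorem mainTheorem2:
  fixes \<pi> :: "('v::finite) state \<Rightarrow> real" and C :: "'v prog"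
  assumes "\<forall>\<sigma>. 0 \<le> \<pi> \<sigma>"
    and "wf_prog C"
  shows "\<forall>\<sigma>. enn2ereal (ert C (\<lambda>_. 0) \<sigma>) \<le> aert \<pi> C (\<lambda>_. 0) \<sigma> + ereal (\<pi> \<sigma>)"
proof
  fix \<sigma>
  have zero_in_A: "in_A \<pi> (\<lambda>_. 0)"
    using assms(1) by (simp add: in_A_def)
  then have "ert C (\<lambda>_. 0) \<le> plus_potential \<pi> (aert \<pi> C (\<lambda>_. 0))"
    using assms(2) by (intro ert_le_plus_potential_aert) (simp_all add: le_fun_def)
  then have "enn2ereal (ert C (\<lambda>_. 0) \<sigma>) \<le> enn2ereal (plus_potential \<pi> (aert \<pi> C (\<lambda>_. 0)) \<sigma>)"
    by (metis le_funD less_eq_ennreal.rep_eq)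
  also have "\<dots> = aert \<pi> C (\<lambda>_. 0) \<sigma> + ereal (\<pi> \<sigma>)"
    using zero_in_A assms(2) by (simp add: aert_in_A enn2ereal_plus_potential)
  finally show "enn2ereal (ert C (\<lambda>_. 0) \<sigma>) \<le> aert \<pi> C (\<lambda>_. 0) \<sigma> + ereal (\<pi> \<sigma>)" .
qed

end
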